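(* For every integer $k\ge 2$, the complete multipartite graph $K_{1,2*(k-1),k-1}$ (with one part of size $1$, $k-1$ parts of size $2$, and one further part of size $k-1$) has m-number $k+1$.
   Context: All graphs are finite, simple and undirected. A list assignment $L$ for a graph $G$ assigns to each vertex $v$ a set $L(v)$ of colors; an $L$-coloring is a proper vertex coloring $c$ of $G$ with $c(v)\in L(v)$ for every vertex $v$. A $k$-list assignment is a list assignment with $|L(v)|=k$ for all $v$. $G$ is uniquely $k$-list colorable (U$k$LC) if there exists a $k$-list assignment $L$ such that $G$ has exactly one $L$-coloring. $G$ has property $M(k)$ if it is not U$k$LC, i.e. for every $k$-list assignment $L$, $G$ has either no $L$-coloring or at least two $L$-colorings. The m-number $m(G)$ is the least integer $k\ge 1$ such that $G$ has property $M(k)$. (Every U$k$LC graph is also U$(k-1)$LC, so $G$ is U$k$LC iff $k<m(G)$.) *)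

theory Defs
  imports Main
begin

text \<open>A graph is given by a vertex set V and an edge relation E (assumed symmetric
  and irreflexive for simple graphs). Colors are natural numbers.\<close>

definition L_coloring :: "'v set \<Rightarrow> ('v \<Rightarrow> 'v \<Rightarrow> bool) \<Rightarrow> ('v \<Rightarrow> nat set) \<Rightarrow> ('v \<Rightarrow> nat) \<Rightarrow> bool" where
  "L_coloring V E L c \<longleftrightarrow>
     (\<forall>v\<in>V. c v \<in> L v) \<and> (\<forall>u\<in>V. \<forall>v\<in>V. E u v \<longrightarrow> c u \<noteq> c v)"

definition k_list_assignment :: "'v set \<Rightarrow> ('v \<Rightarrow> nat set) \<Rightarrow> nat \<Rightarrow> bool" where
  "k_list_assignment V L k \<longleftrightarrow> (\<forall>v\<in>V. finite (L v) \<and> card (L v) = k)"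

definition unique_L_coloring :: "'v set \<Rightarrow> ('v \<Rightarrow> 'v \<Rightarrow> bool) \<Rightarrow> ('v \<Rightarrow> nat set) \<Rightarrow> bool" where
  "unique_L_coloring V E L \<longleftrightarrow>
     (\<exists>c. L_coloring V E L c \<and> (\<forall>c'. L_coloring V E L c' \<longrightarrow> (\<forall>v\<in>V. c' v = c v)))"

definition uniquely_k_list_colorable :: "'v set \<Rightarrow> ('v \<Rightarrow> 'v \<Rightarrow> bool) \<Rightarrow> nat \<Rightarrow> bool" where
  "uniquely_k_list_colorable V E k \<longleftrightarrow>
     (\<exists>L. k_list_assignment V L k \<and> unique_L_coloring V E L)"

definition property_M :: "'v set \<Rightarrow> ('v \<Rightarrow> 'v \<Rightarrow> bool) \<Rightarrow> nat \<Rightarrow> bool" where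
  "property_M V E k \<longleftrightarrow> \<not> uniquely_k_list_colorable V E k"

definition m_number :: "'v set \<Rightarrow> ('v \<Rightarrow> 'v \<Rightarrow> bool) \<Rightarrow> nat" where
  "m_number V E = (LEAST k. 1 \<le> k \<and> property_M V E k)"

text \<open>Complete multipartite graph with parts of the sizes listed in s:
  vertex (i,j) is the j-th vertex of part i; two vertices are adjacent iff in different parts.\<close>
definition cmp_V :: "nat list \<Rightarrow> (nat \<times> nat) set" where
  "cmp_V s = {(i, j). i < length s \<and> j < s ! i}"

definition cmp_E :: "nat list \<Rightarrow> nat \<times> nat \<Rightarrow> nat \<times> nat \<Rightarrow> bool" where
  "cmp_E s u v \<longleftrightarrow> fst u \<noteq> fst v"

definition K_parts :: "nat \<Rightarrow> nat list" where
  "K_parts k = [1] @ replicate (k - 1) 2 @ [k - 1]"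

end

theory Submission
  imports Defs
begin

text \<open>
  Let c be the unique L-colouring of a graph on n vertices with lists of size l,
  and U the set of colours it uses. Every list lies in U, and no permutation of U that keeps
  each vertex inside its list can move a colour, since it would yield a second colouring.
  Hence every nonempty set X of colours contains a colour x such that no other colour of X lies
  in the lists of all vertices coloured x; consequently at most e + 1 colour classes miss at most
  e colours of U from the intersection of their lists. A class of size s misses at most
  s (|U| - l) colours, so there are at most (|U| - l) + 1 singleton classes and at most
  2 (|U| - l) + 1 classes of size at most 2, and counting vertices class by class gives
  3 l \<le> n + 2. With n = 3k - 2 this rules out lists of size k + 1.

  Lower bound. An explicit k-list assignment has a unique colouring, and unique colourability
  passes to shorter lists by deleting one unused colour from every list.
\<close>

lemma finite_self_map_invariant_subset:
  assumes "finite X" "X \<noteq> {}" "f ` X \<subseteq> X"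
  shows "\<exists>Z\<subseteq>X. Z \<noteq> {} \<and> f ` Z = Z"
  using assms
proof (induction X rule: finite_psubset_induct)
  case (psubset X)
  show ?case
  proof (cases "f ` X = X")
    case True
    with psubset.prems show ?thesis by blast
  next
    case False
    with psubset.prems have "f ` X \<subset> X" "f ` X \<noteq> {}" "f ` f ` X \<subseteq> f ` X"
      by auto
    with psubset.IH show ?thesis by (meson psubset_imp_subset subset_trans)
  qed
qed

locale unique_list_coloring =
  fixes V :: "'v set" and E :: "'v \<Rightarrow> 'v \<Rightarrow> bool" and L :: "'v \<Rightarrow> nat set"
    and c :: "'v \<Rightarrow> nat"
  assumes finite_vertices: "finite V"
    and coloring: "L_coloring V E L c"
    and unique: "L_coloring V E L c' \<Longrightarrow> v \<in> V \<Longrightarrow> c' v = c v"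
begin

lemma color_in_list: "v \<in> V \<Longrightarrow> c v \<in> L v"
  using coloring by (simp add: L_coloring_def)

lemma proper: "u \<in> V \<Longrightarrow> v \<in> V \<Longrightarrow> E u v \<Longrightarrow> c u \<noteq> c v"
  using coloring by (simp add: L_coloring_def)

lemma list_subset_used_colors:
  assumes w: "w \<in> V"
  shows "L w \<subseteq> c ` V"
proof
  fix y assume y: "y \<in> L w"
  show "y \<in> c ` V"
  proof (rule ccontr)
    assume fresh: "y \<notin> c ` V"
    have "L_coloring V E L (c(w := y))"
      unfolding L_coloring_def
    proof (intro conjI ballI impI)
      fix v assume "v \<in> V"
      with y color_in_list show "(c(w := y)) v \<in> L v" by simp
    next
      fix u v assume "u \<in> V" "v \<in> V" "E u v"
      with fresh proper[OF this] show "(c(w := y)) u \<noteq> (c(w := y)) v" by auto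
    qed
    with unique[OF _ w] have "y = c w" by simp
    with fresh w show False by blast
  qed
qed

lemma color_permutation_fixes_colors:
  assumes inj: "inj_on p (c ` V)" and lists: "\<And>v. v \<in> V \<Longrightarrow> p (c v) \<in> L v"
    and x: "x \<in> c ` V"
  shows "p x = x"
proof -
  have "L_coloring V E L (p \<circ> c)"
    unfolding L_coloring_def
  proof (intro conjI ballI impI)
    fix v assume "v \<in> V"
    then show "(p \<circ> c) v \<in> L v" by (simp add: lists)
  next
    fix u v assume uv: "u \<in> V" "v \<in> V" "E u v"
    then have "c u \<noteq> c v" by (rule proper)
    with inj uv(1,2) show "(p \<circ> c) u \<noteq> (p \<circ> c) v"
      unfolding inj_on_def by auto
  qed
  moreover obtain v where "v \<in> V" "x = c v" using x by blast
  ultimately show ?thesis using unique[of "p \<circ> c" v] by simp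
qed

definition color_class :: "nat \<Rightarrow> 'v set" where
  "color_class x = {v \<in> V. c v = x}"

definition common_colors :: "nat \<Rightarrow> nat set" where
  "common_colors x = (\<Inter>v \<in> color_class x. L v)"

lemma finite_color_class: "finite (color_class x)"
  using finite_vertices by (simp add: color_class_def)

lemma ex_color_without_alternative:
  assumes X: "X \<subseteq> c ` V" "X \<noteq> {}"
  shows "\<exists>x\<in>X. common_colors x \<inter> X \<subseteq> {x}"
proof (rule ccontr)
  assume "\<not> ?thesis"
  then have "\<forall>x\<in>X. \<exists>y. y \<in> common_colors x \<inter> X \<and> y \<noteq> x" by blast
  then obtain f where f: "\<forall>x\<in>X. f x \<in> common_colors x \<inter> X \<and> f x \<noteq> x"
    by (rule bchoice[THEN exE])
  have "finite X" using X(1) finite_vertices finite_subset by blast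
  then obtain Z where Z: "Z \<subseteq> X" "Z \<noteq> {}" "f ` Z = Z"
    using finite_self_map_invariant_subset[OF _ X(2), of f] f by blast
  have "inj_on f Z"
    using Z \<open>finite X\<close> by (intro finite_surj_inj) (auto intro: finite_subset)
  define p where "p x = (if x \<in> Z then f x else x)" for x
  have "inj_on p (c ` V)"
  proof (rule inj_onI)
    fix x y assume "p x = p y"
    moreover have "f x \<in> Z" if "x \<in> Z" for x using that Z(3) by blast
    ultimately show "x = y"
      using \<open>inj_on f Z\<close> unfolding p_def inj_on_def by (smt (verit))
  qed
  moreover have "p (c v) \<in> L v" if "v \<in> V" for v
  proof (cases "c v \<in> Z")
    case True
    with f Z(1) have "f (c v) \<in> common_colors (c v)" by blast
    with that True show ?thesis by (auto simp: p_def common_colors_def color_class_def)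
  qed (simp add: p_def color_in_list that)
  ultimately have "p z = z" if "z \<in> Z" for z
    using color_permutation_fixes_colors[of p z] that Z(1) X(1) by blast
  moreover obtain z where "z \<in> Z" using Z(2) by blast
  ultimately show False using f Z(1) unfolding p_def by (metis subsetD)
qed

lemma card_colors_with_few_missing_le:
  "card {x \<in> c ` V. card (c ` V - common_colors x) \<le> e} \<le> e + 1" (is "card ?Y \<le> _")
proof (cases "?Y = {}")
  case False
  then obtain x where x: "x \<in> ?Y" "common_colors x \<inter> ?Y \<subseteq> {x}"
    using ex_color_without_alternative[of ?Y] by blast
  have "finite ?Y" using finite_vertices by simp
  have "card (?Y - {x}) \<le> card (c ` V - common_colors x)"
    using x finite_vertices by (intro card_mono) auto
  also have "\<dots> \<le> e" using x(1) by simp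
  finally show ?thesis using x(1) \<open>finite ?Y\<close> by (simp add: card_Diff_singleton)
qed (simp only: card.empty)

context
  fixes l :: nat
  assumes lists: "k_list_assignment V L l"
begin

lemma card_missing_common_colors_le:
  "card (c ` V - common_colors x) \<le> card (color_class x) * (card (c ` V) - l)"
proof -
  have "c ` V - common_colors x = (\<Union>v \<in> color_class x. c ` V - L v)"
    by (auto simp: common_colors_def)
  also have "card \<dots> \<le> (\<Sum>v \<in> color_class x. card (c ` V - L v))"
    by (rule card_UN_le[OF finite_color_class])
  also have "\<dots> = (\<Sum>v \<in> color_class x. card (c ` V) - l)"
  proof (rule sum.cong)
    fix v assume "v \<in> color_class x"
    then have "v \<in> V" by (simp add: color_class_def)
    with lists list_subset_used_colors show "card (c ` V - L v) = card (c ` V) - l"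
      by (simp add: card_Diff_subset k_list_assignment_def)
  qed simp
  finally show ?thesis by simp
qed

lemma card_small_color_classes_le:
  "card {x \<in> c ` V. card (color_class x) \<le> t} \<le> t * (card (c ` V) - l) + 1"
proof -
  have "card (c ` V - common_colors x) \<le> t * (card (c ` V) - l)"
    if "card (color_class x) \<le> t" for x
    using card_missing_common_colors_le[of x] mult_le_mono1[OF that] by (rule le_trans)
  then have "{x \<in> c ` V. card (color_class x) \<le> t}
      \<subseteq> {x \<in> c ` V. card (c ` V - common_colors x) \<le> t * (card (c ` V) - l)}"
    by blast
  then have "card {x \<in> c ` V. card (color_class x) \<le> t}
      \<le> card {x \<in> c ` V. card (c ` V - common_colors x) \<le> t * (card (c ` V) - l)}"
    using finite_vertices by (intro card_mono) auto
  also have "\<dots> \<le> t * (card (c ` V) - l) + 1"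
    by (rule card_colors_with_few_missing_le)
  finally show ?thesis .
qed

lemma three_times_list_size_le:
  assumes "V \<noteq> {}"
  shows "3 * l \<le> card V + 2"
proof -
  let ?U = "c ` V"
  let ?n = "\<lambda>x. card (color_class x)"
  define d where "d = card ?U - l"
  obtain w where "w \<in> V" using assms by blast
  with lists list_subset_used_colors finite_vertices have "l \<le> card ?U"
    by (metis card_mono finite_imageI k_list_assignment_def)
  then have U: "card ?U = l + d" by (simp add: d_def)
  have "V = (\<Union>x \<in> ?U. color_class x)" by (auto simp: color_class_def)
  moreover have "card (\<Union>x \<in> ?U. color_class x) = (\<Sum>x \<in> ?U. ?n x)"
    using finite_vertices by (intro card_UN_disjoint) (auto simp: finite_color_class color_class_def)
  ultimately have V: "card V = (\<Sum>x \<in> ?U. ?n x)" by simp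
  have "3 * card ?U = (\<Sum>x \<in> ?U. 3)" by simp
  also have "\<dots> \<le> (\<Sum>x \<in> ?U. ?n x + of_bool (?n x \<le> 1) + of_bool (?n x \<le> 2))"
  proof (rule sum_mono)
    fix x assume "x \<in> ?U"
    then have "color_class x \<noteq> {}" by (auto simp: color_class_def)
    then have "?n x \<ge> 1" using finite_color_class by (simp add: Suc_le_eq card_gt_0_iff)
    then show "3 \<le> ?n x + of_bool (?n x \<le> 1) + of_bool (?n x \<le> 2)" by auto
  qed
  also have "\<dots> = card V + card {x \<in> ?U. ?n x \<le> 1} + card {x \<in> ?U. ?n x \<le> 2}"
    using finite_vertices by (simp add: sum.distrib V Int_def conj_commute)
  also have "\<dots> \<le> card V + (d + 1) + (2 * d + 1)"
    using card_small_color_classes_le[of 1] card_small_color_classes_le[of 2]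
    by (simp add: d_def)
  finally show ?thesis using U by simp
qed

end

end

lemma uniquely_k_list_colorable_card_bound:
  assumes "finite V" "V \<noteq> {}" "uniquely_k_list_colorable V E l"
  shows "3 * l \<le> card V + 2"
proof -
  obtain L c where lists: "k_list_assignment V L l" and col: "L_coloring V E L c"
    and unique: "\<And>c'. L_coloring V E L c' \<Longrightarrow> \<forall>v\<in>V. c' v = c v"
    using assms(3) unfolding uniquely_k_list_colorable_def unique_L_coloring_def by blast
  interpret unique_list_coloring V E L c
  proof
    fix c' v assume "L_coloring V E L c'" "v \<in> V"
    with unique show "c' v = c v" by blast
  qed (use assms(1) col in auto)
  show ?thesis using three_times_list_size_le[OF lists assms(2)] .
qed

lemma uniquely_k_list_colorable_Suc_imp:
  assumes "uniquely_k_list_colorable V E (Suc l)" "1 \<le> l"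
  shows "uniquely_k_list_colorable V E l"
proof -
  obtain L c where lists: "k_list_assignment V L (Suc l)" and col: "L_coloring V E L c"
    and unique: "\<And>c'. L_coloring V E L c' \<Longrightarrow> \<forall>v\<in>V. c' v = c v"
    using assms(1) unfolding uniquely_k_list_colorable_def unique_L_coloring_def by blast
  have "\<forall>v\<in>V. \<exists>y. y \<in> L v - {c v}"
  proof
    fix v assume "v \<in> V"
    have "card (L v - {c v}) \<ge> l"
      using lists \<open>v \<in> V\<close> by (simp add: k_list_assignment_def card_Diff_singleton_if)
    with assms(2) show "\<exists>y. y \<in> L v - {c v}" by (cases "L v - {c v} = {}") auto
  qed
  then obtain r where r: "\<forall>v\<in>V. r v \<in> L v - {c v}" by (rule bchoice[THEN exE])
  define L' where "L' v = L v - {r v}" for v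
  have "k_list_assignment V L' l"
    using lists r by (simp add: k_list_assignment_def L'_def)
  moreover have "L_coloring V E L' c"
    using col r by (auto simp: L_coloring_def L'_def)
  moreover have "\<forall>v\<in>V. c' v = c v" if "L_coloring V E L' c'" for c'
    using that unique by (auto simp: L_coloring_def L'_def)
  ultimately show ?thesis
    unfolding uniquely_k_list_colorable_def unique_L_coloring_def by blast
qed

lemma uniquely_k_list_colorable_mono:
  assumes "uniquely_k_list_colorable V E l" "1 \<le> j" "j \<le> l"
  shows "uniquely_k_list_colorable V E j"
  using assms(3,1)
proof (induction rule: inc_induct)
  case (step n)
  with assms(2) show ?case by (simp add: uniquely_k_list_colorable_Suc_imp)
qed

lemma m_number_eq_Suc:
  assumes "uniquely_k_list_colorable V E k" "\<not> uniquely_k_list_colorable V E (Suc k)"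
  shows "m_number V E = Suc k"
  unfolding m_number_def property_M_def
proof (rule Least_equality)
  show "1 \<le> Suc k \<and> \<not> uniquely_k_list_colorable V E (Suc k)"
    using assms(2) by simp
next
  fix j assume "1 \<le> j \<and> \<not> uniquely_k_list_colorable V E j"
  with uniquely_k_list_colorable_mono[OF assms(1)] show "Suc k \<le> j"
    by (meson not_less_eq_eq)
qed

lemma finite_cmp_V: "finite (cmp_V s)"
  and card_cmp_V: "card (cmp_V s) = sum_list s"
proof -
  have Sigma: "cmp_V s = (SIGMA i:{..<length s}. {..<s ! i})"
    by (auto simp: cmp_V_def)
  show "finite (cmp_V s)" unfolding Sigma by auto
  show "card (cmp_V s) = sum_list s"
    unfolding Sigma by (simp add: sum_list_sum_nth atLeast0LessThan)
qed

lemma card_cmp_V_K_parts: "1 \<le> k \<Longrightarrow> card (cmp_V (K_parts k)) = 3 * k - 2"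
  by (simp add: card_cmp_V K_parts_def sum_list_replicate)

lemma mem_cmp_V_K_parts:
  assumes "1 \<le> k"
  shows "(i, j) \<in> cmp_V (K_parts k) \<longleftrightarrow>
    i \<le> k \<and> j < (if i = 0 then 1 else if i < k then 2 else k - 1)"
proof -
  have "K_parts k ! i = (if i = 0 then 1 else if i < k then 2 else k - 1)" if "i \<le> k"
    using assms that by (cases i) (auto simp: K_parts_def nth_append)
  then show ?thesis
    using assms by (auto simp: cmp_V_def K_parts_def simp del: One_nat_def)
qed

text \<open>
  The vertices (i, 0) with i < k, one in each of the first k parts, form a k-clique with the
  common list {..<k}; the remaining vertices are (i, 1) for 0 < i < k and (k, j) for j < k - 1.
\<close>

fun K_lists :: "nat \<Rightarrow> nat \<times> nat \<Rightarrow> nat set" where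
  "K_lists k (i, j) =
    (if i = k then insert (k + j) {1..<k}
     else if j = 0 then {..<k}
     else insert i {k..<2 * k - 1})"

fun K_coloring :: "nat \<Rightarrow> nat \<times> nat \<Rightarrow> nat" where
  "K_coloring k (i, j) = (if i < k then i else k + j)"

lemma K_lists_k_list_assignment:
  assumes "2 \<le> k"
  shows "k_list_assignment (cmp_V (K_parts k)) (K_lists k) k"
  unfolding k_list_assignment_def
proof
  fix v assume v: "v \<in> cmp_V (K_parts k)"
  obtain i j where ij: "v = (i, j)" by fastforce
  with v assms have "i \<le> k" "i \<noteq> k \<Longrightarrow> j \<noteq> 0 \<Longrightarrow> 1 \<le> i"
    by (auto simp: mem_cmp_V_K_parts split: if_splits)
  with assms show "finite (K_lists k v) \<and> card (K_lists k v) = k"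
    unfolding ij by auto
qed

lemma K_coloring_L_coloring:
  assumes "2 \<le> k"
  shows "L_coloring (cmp_V (K_parts k)) (cmp_E (K_parts k)) (K_lists k) (K_coloring k)"
  using assms by (auto simp: L_coloring_def cmp_E_def mem_cmp_V_K_parts split: if_splits)

context
  fixes k :: nat and c :: "nat \<times> nat \<Rightarrow> nat"
  assumes k: "2 \<le> k"
    and coloring: "L_coloring (cmp_V (K_parts k)) (cmp_E (K_parts k)) (K_lists k) c"
begin

private lemma vertex_iff:
  "(i, j) \<in> cmp_V (K_parts k) \<longleftrightarrow>
    i \<le> k \<and> j < (if i = 0 then 1 else if i < k then 2 else k - 1)"
  using k by (simp add: mem_cmp_V_K_parts)

private lemma first_row_vertex: "i < k \<Longrightarrow> (i, 0) \<in> cmp_V (K_parts k)"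
  and second_row_vertex: "1 \<le> i \<Longrightarrow> i < k \<Longrightarrow> (i, 1) \<in> cmp_V (K_parts k)"
  and last_part_vertex: "j < k - 1 \<Longrightarrow> (k, j) \<in> cmp_V (K_parts k)"
  using k by (simp_all add: vertex_iff)

private lemma color_in_list: "(i, j) \<in> cmp_V (K_parts k) \<Longrightarrow> c (i, j) \<in> K_lists k (i, j)"
  using coloring unfolding L_coloring_def by blast

private lemma proper:
  "(i, j) \<in> cmp_V (K_parts k) \<Longrightarrow> (i', j') \<in> cmp_V (K_parts k) \<Longrightarrow> i \<noteq> i'
    \<Longrightarrow> c (i, j) \<noteq> c (i', j')"
  using coloring by (simp add: L_coloring_def cmp_E_def)

lemma K_first_row_onto:
  assumes "y < k"
  shows "\<exists>i<k. c (i, 0) = y"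
proof -
  have "inj_on (\<lambda>i. c (i, 0)) {..<k}"
    using proper[OF first_row_vertex first_row_vertex] by (intro inj_onI) blast
  moreover have "(\<lambda>i. c (i, 0)) ` {..<k} \<subseteq> {..<k}"
    using color_in_list[OF first_row_vertex] by auto
  ultimately have "(\<lambda>i. c (i, 0)) ` {..<k} = {..<k}"
    by (simp add: endo_inj_surj)
  with assms have "y \<in> (\<lambda>i. c (i, 0)) ` {..<k}" by simp
  then show ?thesis by blast
qed

lemma K_last_part_colors:
  assumes j: "j < k - 1"
  shows "c (k, j) = k + j"
proof (rule ccontr)
  assume "c (k, j) \<noteq> k + j"
  with color_in_list[of k j] j k have "c (k, j) < k" by (simp add: vertex_iff)
  then obtain i where "i < k" "c (i, 0) = c (k, j)" using K_first_row_onto by blast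
  with proper[OF first_row_vertex last_part_vertex] j show False by simp
qed

lemma K_second_row_colors:
  assumes i: "1 \<le> i" "i < k"
  shows "c (i, 1) = i"
proof (rule ccontr)
  assume "c (i, 1) \<noteq> i"
  with color_in_list[of i 1] i have "k \<le> c (i, 1)" "c (i, 1) < 2 * k - 1"
    by (simp_all add: vertex_iff)
  then obtain j where j: "j < k - 1" "c (i, 1) = k + j"
    by (intro that[of "c (i, 1) - k"]) auto
  with proper[OF second_row_vertex[OF i] last_part_vertex[OF j(1)]] K_last_part_colors[OF j(1)] i
  show False by simp
qed

lemma K_first_row_colors:
  assumes i: "i < k"
  shows "c (i, 0) = i"
proof -
  have first_row_ge_1: "c (i', 0) = i'" if i': "1 \<le> i'" "i' < k" for i'
  proof -
    obtain i'' where i'': "i'' < k" "c (i'', 0) = i'" using K_first_row_onto i' by blast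
    have "i'' = i'"
    proof (rule ccontr)
      assume "i'' \<noteq> i'"
      with proper[OF first_row_vertex[OF i''(1)] second_row_vertex[OF i']] i''(2)
        K_second_row_colors[OF i']
      show False by simp
    qed
    with i'' show ?thesis by simp
  qed
  show ?thesis
  proof (cases "i = 0")
    case True
    have "c (0, 0) < k" using color_in_list[OF first_row_vertex[of 0]] k by simp
    moreover have "c (0, 0) \<notin> {1..<k}"
    proof
      assume y: "c (0, 0) \<in> {1..<k}"
      with first_row_ge_1 have "c (c (0, 0), 0) = c (0, 0)" by simp
      with proper[OF first_row_vertex[of 0] first_row_vertex[of "c (0, 0)"]] y k show False
        by simp
    qed
    ultimately show ?thesis using True by simp
  qed (use first_row_ge_1 i in simp)
qed

lemma K_coloring_unique:
  assumes "v \<in> cmp_V (K_parts k)"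
  shows "c v = K_coloring k v"
proof -
  obtain i j where v: "v = (i, j)" by fastforce
  with assms k have "i < k \<and> (j = 0 \<or> 1 \<le> i \<and> j = 1) \<or> i = k \<and> j < k - 1"
    by (auto simp: vertex_iff split: if_splits)
  then show ?thesis
    using K_first_row_colors K_second_row_colors K_last_part_colors by (auto simp: v)
qed

end

lemma K_parts_uniquely_k_list_colorable:
  assumes "2 \<le> k"
  shows "uniquely_k_list_colorable (cmp_V (K_parts k)) (cmp_E (K_parts k)) k"
  unfolding uniquely_k_list_colorable_def unique_L_coloring_def
  using assms K_lists_k_list_assignment K_coloring_L_coloring K_coloring_unique by blast

theorem mainTheorem16:
  fixes k :: nat
  assumes "k \<ge> 2"
  shows "m_number (cmp_V (K_parts k)) (cmp_E (K_parts k)) = k + 1"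
proof -
  let ?V = "cmp_V (K_parts k)" and ?E = "cmp_E (K_parts k)"
  have "\<not> uniquely_k_list_colorable ?V ?E (Suc k)"
  proof
    assume "uniquely_k_list_colorable ?V ?E (Suc k)"
    moreover have "?V \<noteq> {}" using assms mem_cmp_V_K_parts[of k 0 0] by auto
    ultimately have "3 * Suc k \<le> card ?V + 2"
      using finite_cmp_V uniquely_k_list_colorable_card_bound by blast
    with assms show False by (simp add: card_cmp_V_K_parts)
  qed
  with assms K_parts_uniquely_k_list_colorable show ?thesis
    by (simp add: m_number_eq_Suc)
qed

end
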